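(* Let $G$ be a graph with $n$ vertices, maximum degree $\Delta$ and minimum degree $\delta$, and let $\overline{G}$ be its complement. If $0\leq \alpha \leq 1$ and $1\leq k\leq n$, then $$(1-\alpha)n+(\alpha n-1)k \leq S_{k}(A_{\alpha}(G))+S_{k}(A_{\alpha}(\overline{G}))\leq k\left[(2-\alpha)n+\alpha(\Delta-\delta-1)-(1-\alpha)(k+1)\right].$$
   Context: All graphs are simple and undirected. $A_{\alpha}(G)=\alpha D(G)+(1-\alpha)A(G)$, where $A(G)$ is the adjacency matrix and $D(G)$ the diagonal degree matrix. For a real symmetric matrix $M$ with eigenvalues $\lambda_1(M)\geq\cdots\geq\lambda_n(M)$, $S_k(M)=\sum_{i=1}^k\lambda_i(M)$. *)

theory Defs
  imports "Jordan_Normal_Form.Char_Poly" "HOL-Computational_Algebra.Polynomial"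
begin

definition simple_graph :: "nat \<Rightarrow> (nat \<Rightarrow> nat \<Rightarrow> bool) \<Rightarrow> bool" where
  "simple_graph n E \<longleftrightarrow> (\<forall>i<n. \<forall>j<n. E i j \<longleftrightarrow> E j i) \<and> (\<forall>i<n. \<not> E i i)"

definition degree :: "nat \<Rightarrow> (nat \<Rightarrow> nat \<Rightarrow> bool) \<Rightarrow> nat \<Rightarrow> nat" where
  "degree n E i = card {j. j < n \<and> E i j}"

definition max_degree :: "nat \<Rightarrow> (nat \<Rightarrow> nat \<Rightarrow> bool) \<Rightarrow> nat" where
  "max_degree n E = Max (degree n E ` {0..<n})"

definition min_degree :: "nat \<Rightarrow> (nat \<Rightarrow> nat \<Rightarrow> bool) \<Rightarrow> nat" where
  "min_degree n E = Min (degree n E ` {0..<n})"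

definition complement :: "(nat \<Rightarrow> nat \<Rightarrow> bool) \<Rightarrow> nat \<Rightarrow> nat \<Rightarrow> bool" where
  "complement E i j \<longleftrightarrow> i \<noteq> j \<and> \<not> E i j"

definition adj_mat :: "nat \<Rightarrow> (nat \<Rightarrow> nat \<Rightarrow> bool) \<Rightarrow> real mat" where
  "adj_mat n E = mat n n (\<lambda>(i,j). if E i j then 1 else 0)"

definition deg_mat :: "nat \<Rightarrow> (nat \<Rightarrow> nat \<Rightarrow> bool) \<Rightarrow> real mat" where
  "deg_mat n E = mat n n (\<lambda>(i,j). if i = j then real (degree n E i) else 0)"

definition A_alpha :: "real \<Rightarrow> nat \<Rightarrow> (nat \<Rightarrow> nat \<Rightarrow> bool) \<Rightarrow> real mat" where
  "A_alpha \<alpha> n E = \<alpha> \<cdot>\<^sub>m deg_mat n E + (1 - \<alpha>) \<cdot>\<^sub>m adj_mat n E"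

text \<open>Eigenvalues (with multiplicity) of a real square matrix: the real roots of its
  characteristic polynomial; for a real symmetric matrix these are all n eigenvalues.\<close>
definition eigenvalues_desc :: "real mat \<Rightarrow> real list" where
  "eigenvalues_desc M = rev (sorted_list_of_multiset (proots (char_poly M)))"

definition S_k :: "nat \<Rightarrow> real mat \<Rightarrow> real" where
  "S_k k M = sum_list (take k (eigenvalues_desc M))"

end

theory Submission
  imports Defs "Jordan_Normal_Form.Schur_Decomposition"
begin

text \<open>
  By Ky Fan's maximum principle, S_k(X) is the maximum of \<open>\<Sum>j<k. x j \<bullet> (X *\<^sub>v x j)\<close> over
  orthonormal k-frames x. Hence S_k is subadditive and positively homogeneous on symmetric
  matrices, and it is bounded above or below as soon as the quadratic form of X is.

  Since D(G) + D(G') = (n - 1) I and A(G) + A(G') = J - I for the complement G', the quadratic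
  form of A_alpha(G) + A_alpha(G') is \<open>(\<alpha> n - 1) |x|\<^sup>2 + (1 - \<alpha>) (\<Sum>i. x i)\<^sup>2\<close>; a frame
  starting with the normalised all-ones vector gives the lower bound. For the upper bound,
  \<open>S_k(A_alpha) \<le> \<alpha> S_k(D) + (1 - \<alpha>) S_k(A)\<close>; the degree matrices contribute k \<Delta> and
  k (n - 1 - \<delta>), and \<open>S_k(A(G)) + S_k(A(G')) \<le> k (2n - k - 1)\<close>: for k = n both sides are
  traces, hence 0, and for k < n Cauchy-Schwarz gives \<open>S_k(A)\<^sup>2 \<le> k |A|\<^sub>F\<^sup>2\<close>, while the squared
  Frobenius norms of A(G) and A(G') add up to n (n - 1).

  The spectral theorem behind all this is proved by deflation along the real roots of the
  characteristic polynomial, taken in the order in which they appear in eigenvalues_desc.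
\<close>

section \<open>Orthonormal families and orthogonal matrices\<close>

lemma scalar_prod_sum:
  assumes "x \<in> carrier_vec n"
  shows "y \<bullet> x = (\<Sum>t<n. y $ t * x $ t)"
  using assms unfolding scalar_prod_def by (simp add: atLeast0LessThan)

lemma scalar_prod_self_sum:
  assumes "x \<in> carrier_vec n"
  shows "x \<bullet> x = (\<Sum>t<n. (x $ t)\<^sup>2 :: real)"
  using scalar_prod_sum[OF assms] by (simp add: power2_eq_square)

lemma bilinear_form_sum:
  fixes A :: "'a :: comm_semiring_0 mat"
  assumes "A \<in> carrier_mat n n" "x \<in> carrier_vec n" "y \<in> carrier_vec n"
  shows "x \<bullet> (A *\<^sub>v y) = (\<Sum>i<n. \<Sum>j<n. x $ i * A $$ (i, j) * y $ j)"
  using assms unfolding scalar_prod_def mult_mat_vec_def row_def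
  by (auto simp: sum_distrib_left mult.assoc atLeast0LessThan intro!: sum.cong)

lemma quadratic_form_lincomb:
  fixes X Y :: "real mat"
  assumes X: "X \<in> carrier_mat n n" and Y: "Y \<in> carrier_mat n n" and x: "x \<in> carrier_vec n"
  shows "x \<bullet> ((a \<cdot>\<^sub>m X + b \<cdot>\<^sub>m Y) *\<^sub>v x) = a * (x \<bullet> (X *\<^sub>v x)) + b * (x \<bullet> (Y *\<^sub>v x))"
proof -
  have "x \<bullet> ((a \<cdot>\<^sub>m X + b \<cdot>\<^sub>m Y) *\<^sub>v x)
      = (\<Sum>i<n. \<Sum>j<n. a * (x $ i * X $$ (i, j) * x $ j) + b * (x $ i * Y $$ (i, j) * x $ j))"
    using X Y x by (subst bilinear_form_sum[of _ n]) (auto simp: algebra_simps intro!: sum.cong)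
  also have "\<dots> = a * (x \<bullet> (X *\<^sub>v x)) + b * (x \<bullet> (Y *\<^sub>v x))"
    using X Y x by (simp add: bilinear_form_sum[of _ n] sum.distrib sum_distrib_left)
  finally show ?thesis .
qed

lemma symmetric_mat_entry:
  assumes "A \<in> carrier_mat n n" "A\<^sup>T = A" "i < n" "j < n"
  shows "A $$ (i, j) = A $$ (j, i)"
  using assms by (metis carrier_matD index_transpose_mat(1))

lemma lincomb_symmetric:
  fixes X Y :: "real mat"
  assumes "X \<in> carrier_mat n n" "X\<^sup>T = X" "Y \<in> carrier_mat n n" "Y\<^sup>T = Y"
  shows "(a \<cdot>\<^sub>m X + b \<cdot>\<^sub>m Y)\<^sup>T = a \<cdot>\<^sub>m X + b \<cdot>\<^sub>m Y"
  by (rule eq_matI)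
    (use assms symmetric_mat_entry[OF assms(1,2)] symmetric_mat_entry[OF assms(3,4)] in auto)

definition orthonormal :: "nat \<Rightarrow> nat \<Rightarrow> (nat \<Rightarrow> real vec) \<Rightarrow> bool" where
  "orthonormal n k u \<longleftrightarrow> (\<forall>j<k. u j \<in> carrier_vec n) \<and>
     (\<forall>i<k. \<forall>j<k. u i \<bullet> u j = (if i = j then 1 else 0))"

lemma orthonormalD:
  assumes "orthonormal n k u" "j < k"
  shows "u j \<in> carrier_vec n" "u j \<bullet> u j = 1"
  using assms unfolding orthonormal_def by auto

lemma orthonormal_mono: "orthonormal n k u \<Longrightarrow> l \<le> k \<Longrightarrow> orthonormal n l u"
  unfolding orthonormal_def by auto

lemma orthonormal_cols_iff:
  assumes U: "U \<in> carrier_mat n n"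
  shows "orthonormal n n (col U) \<longleftrightarrow> U\<^sup>T * U = 1\<^sub>m n"
proof -
  have entry: "(U\<^sup>T * U) $$ (i, j) = col U i \<bullet> col U j" if "i < n" "j < n" for i j
    using U that by (simp add: row_transpose)
  show ?thesis
  proof
    assume "orthonormal n n (col U)"
    then show "U\<^sup>T * U = 1\<^sub>m n"
      using U entry unfolding orthonormal_def by (intro eq_matI) auto
  next
    assume UtU: "U\<^sup>T * U = 1\<^sub>m n"
    show "orthonormal n n (col U)"
      unfolding orthonormal_def
    proof (intro conjI allI impI)
      fix i j assume "i < n" "j < n"
      then show "col U i \<bullet> col U j = (if i = j then 1 else 0)"
        using entry[of i j] UtU by simp
    qed (use U in auto)
  qed
qed

lemma orthonormal_bessel:
  assumes y: "orthonormal n k y" and x: "x \<in> carrier_vec n"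
  shows "(\<Sum>j<k. (y j \<bullet> x)\<^sup>2) \<le> x \<bullet> x"
proof -
  define c where "c j = y j \<bullet> x" for j
  have y_sum: "(\<Sum>t<n. y i $ t * y j $ t) = (if i = j then 1 else 0)" if "i < k" "j < k" for i j
    using y that scalar_prod_sum unfolding orthonormal_def by metis
  have c_sum: "c j = (\<Sum>t<n. y j $ t * x $ t)" for j
    unfolding c_def using scalar_prod_sum[OF x] .
  have cross: "(\<Sum>t<n. x $ t * (\<Sum>j<k. c j * y j $ t)) = (\<Sum>j<k. c j * c j)"
  proof -
    have "(\<Sum>t<n. x $ t * (\<Sum>j<k. c j * y j $ t)) = (\<Sum>j<k. c j * (\<Sum>t<n. y j $ t * x $ t))"
      by (simp add: sum_distrib_left sum.swap[of _ "{..<n}"] mult_ac)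
    then show ?thesis
      by (simp add: c_sum)
  qed
  have square: "(\<Sum>t<n. (\<Sum>j<k. c j * y j $ t)\<^sup>2) = (\<Sum>j<k. c j * c j)"
  proof -
    have "(\<Sum>t<n. (\<Sum>j<k. c j * y j $ t)\<^sup>2)
        = (\<Sum>t<n. \<Sum>j<k. \<Sum>l<k. c j * c l * (y j $ t * y l $ t))"
      by (simp add: power2_eq_square sum_product mult_ac)
    also have "\<dots> = (\<Sum>j<k. \<Sum>l<k. c j * c l * (\<Sum>t<n. y j $ t * y l $ t))"
      by (simp add: sum_distrib_left sum.swap[of _ "{..<n}"])
    also have "\<dots> = (\<Sum>j<k. c j * c j)"
      by (simp add: y_sum if_distrib sum.delta cong: if_cong)
    finally show ?thesis .
  qed
  have "0 \<le> (\<Sum>t<n. (x $ t - (\<Sum>j<k. c j * y j $ t))\<^sup>2)"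
    by (intro sum_nonneg) auto
  also have "\<dots> = (\<Sum>t<n. (x $ t)\<^sup>2) - 2 * (\<Sum>t<n. x $ t * (\<Sum>j<k. c j * y j $ t))
      + (\<Sum>t<n. (\<Sum>j<k. c j * y j $ t)\<^sup>2)"
    by (simp add: power2_diff sum.distrib sum_subtractf sum_distrib_left mult.assoc)
  finally show ?thesis
    unfolding cross square scalar_prod_self_sum[OF x] by (simp add: c_def power2_eq_square)
qed

definition orthogonal_real_mat :: "nat \<Rightarrow> real mat \<Rightarrow> bool" where
  "orthogonal_real_mat n U \<longleftrightarrow> U \<in> carrier_mat n n \<and> U\<^sup>T * U = 1\<^sub>m n"

lemma orthogonal_real_mat_right_inverse:
  "orthogonal_real_mat n U \<Longrightarrow> U * U\<^sup>T = 1\<^sub>m n"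
  unfolding orthogonal_real_mat_def by (metis mat_mult_left_right_inverse transpose_carrier_mat)

lemma orthogonal_real_mat_orthonormal_cols:
  "orthogonal_real_mat n U \<Longrightarrow> orthonormal n n (col U)"
  unfolding orthogonal_real_mat_def using orthonormal_cols_iff by blast

lemma orthogonal_real_mat_mult:
  fixes W B :: "real mat"
  assumes "orthogonal_real_mat n W" "orthogonal_real_mat n B"
  shows "orthogonal_real_mat n (W * B)"
proof -
  have W: "W \<in> carrier_mat n n" "W\<^sup>T * W = 1\<^sub>m n" and B: "B \<in> carrier_mat n n" "B\<^sup>T * B = 1\<^sub>m n"
    using assms unfolding orthogonal_real_mat_def by auto
  have "W\<^sup>T * (W * B) = B"
    using W B by (metis assoc_mult_mat left_mult_one_mat transpose_carrier_mat)
  then have "(W * B)\<^sup>T * (W * B) = B\<^sup>T * B"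
    using W B by (simp add: transpose_mult assoc_mult_mat[of _ n n _ n _ n])
  then show ?thesis
    using W B unfolding orthogonal_real_mat_def by simp
qed

lemma congruence_mult:
  fixes W B A :: "real mat"
  assumes "W \<in> carrier_mat n n" "B \<in> carrier_mat n n" "A \<in> carrier_mat n n"
  shows "(W * B)\<^sup>T * A * (W * B) = B\<^sup>T * (W\<^sup>T * A * W) * B"
  using assms by (simp add: transpose_mult assoc_mult_mat[of _ n n _ n _ n])

lemma orthogonal_real_mat_congruence_similar:
  assumes W: "orthogonal_real_mat n W" and A: "A \<in> carrier_mat n n"
  shows "similar_mat A (W\<^sup>T * A * W)"
proof -
  have Wc: "W \<in> carrier_mat n n" and WtW: "W\<^sup>T * W = 1\<^sub>m n"
    using W unfolding orthogonal_real_mat_def by auto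
  have WWt: "W * W\<^sup>T = 1\<^sub>m n"
    using W by (rule orthogonal_real_mat_right_inverse)
  have "W * (W\<^sup>T * A * W) * W\<^sup>T = (W * W\<^sup>T) * A * (W * W\<^sup>T)"
    using Wc A by (simp add: assoc_mult_mat[of _ n n _ n _ n])
  then have "A = W * (W\<^sup>T * A * W) * W\<^sup>T"
    using A by (simp add: WWt)
  then have "similar_mat_wit A (W\<^sup>T * A * W) W W\<^sup>T"
    using Wc A WtW WWt by (intro similar_mat_witI[of _ _ n]) auto
  then show ?thesis
    unfolding similar_mat_def by blast
qed

lemma orthonormal_complete:
  assumes u: "orthonormal n n u" and "a < n" "b < n"
  shows "(\<Sum>j<n. u j $ a * u j $ b) = (if a = b then 1 else 0)"
proof -
  define U where "U = mat n n (\<lambda>(i, j). u j $ i)"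
  have U: "U \<in> carrier_mat n n" by (simp add: U_def)
  have "col U j = u j" if "j < n" for j
    using orthonormalD(1)[OF u that] that by (auto simp: U_def)
  then have "orthonormal n n (col U)"
    using u unfolding orthonormal_def by simp
  then have "U * U\<^sup>T = 1\<^sub>m n"
    using U orthonormal_cols_iff orthogonal_real_mat_right_inverse
    unfolding orthogonal_real_mat_def by blast
  moreover have "(U * U\<^sup>T) $$ (a, b) = (\<Sum>j<n. u j $ a * u j $ b)"
    using assms U by (simp add: U_def scalar_prod_def atLeast0LessThan)
  ultimately show ?thesis
    using assms by simp
qed

lemma orthonormal_parseval:
  assumes u: "orthonormal n n u" and z: "z \<in> carrier_vec n" and w: "w \<in> carrier_vec n"
  shows "(\<Sum>i<n. (u i \<bullet> z) * (u i \<bullet> w)) = z \<bullet> w"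
proof -
  have "(\<Sum>i<n. (u i \<bullet> z) * (u i \<bullet> w)) = (\<Sum>i<n. (\<Sum>a<n. u i $ a * z $ a) * (\<Sum>b<n. u i $ b * w $ b))"
    using scalar_prod_sum[OF z] scalar_prod_sum[OF w] by simp
  also have "\<dots> = (\<Sum>i<n. \<Sum>a<n. \<Sum>b<n. z $ a * w $ b * (u i $ a * u i $ b))"
    by (simp only: sum_product) (simp add: mult_ac)
  also have "\<dots> = (\<Sum>a<n. \<Sum>i<n. \<Sum>b<n. z $ a * w $ b * (u i $ a * u i $ b))"
    by (rule sum.swap)
  also have "\<dots> = (\<Sum>a<n. \<Sum>b<n. \<Sum>i<n. z $ a * w $ b * (u i $ a * u i $ b))"
    by (rule sum.cong[OF refl], rule sum.swap)
  also have "\<dots> = (\<Sum>a<n. \<Sum>b<n. z $ a * w $ b * (\<Sum>i<n. u i $ a * u i $ b))"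
    by (simp add: sum_distrib_left)
  also have "\<dots> = (\<Sum>a<n. z $ a * w $ a)"
    by (simp add: orthonormal_complete[OF u] if_distrib cong: if_cong)
  finally show ?thesis
    using scalar_prod_sum[OF w] by simp
qed

section \<open>Spectral theorem for real symmetric matrices\<close>

lemma orthogonal_real_mat_of_corthogonal:
  assumes ws: "set ws \<subseteq> carrier_vec n" "corthogonal ws" "length ws = n"
  defines "W \<equiv> mat_of_cols n (map (\<lambda>w. (1 / sqrt (w \<bullet> w)) \<cdot>\<^sub>v w) ws)"
  shows "orthogonal_real_mat n W"
    and "\<And>i. i < n \<Longrightarrow> col W i = (1 / sqrt (ws ! i \<bullet> ws ! i)) \<cdot>\<^sub>v ws ! i"
proof -
  have W: "W \<in> carrier_mat n n"
    using ws by (auto simp: W_def)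
  show col_W: "col W i = (1 / sqrt (ws ! i \<bullet> ws ! i)) \<cdot>\<^sub>v ws ! i" if "i < n" for i
    unfolding W_def using ws that by (subst col_mat_of_cols) auto
  have ws_carrier: "ws ! i \<in> carrier_vec n" if "i < n" for i
    using ws that by auto
  have ws_orth: "ws ! i \<bullet> ws ! j = 0 \<longleftrightarrow> i \<noteq> j" if "i < n" "j < n" for i j
    using corthogonalD[OF ws(2)] that ws(3) by simp
  have pos: "0 < ws ! i \<bullet> ws ! i" if "i < n" for i
    using ws_orth[OF that that] conjugate_square_ge_0_vec[of "ws ! i"] by (simp add: less_le)
  have "orthonormal n n (col W)"
    unfolding orthonormal_def
  proof (intro conjI allI impI)
    fix i j assume ij: "i < n" "j < n"
    show "col W i \<bullet> col W j = (if i = j then 1 else 0)"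
    proof (cases "i = j")
      case True
      have "sqrt (ws ! i \<bullet> ws ! i) * sqrt (ws ! i \<bullet> ws ! i) = ws ! i \<bullet> ws ! i"
        using pos[OF ij(1)] by simp
      then show ?thesis
        using True ij ws_carrier pos[OF ij(1)] by (simp add: col_W)
    next
      case False
      then show ?thesis
        using ij ws_carrier[OF ij(1)] ws_carrier[OF ij(2)] ws_orth[OF ij] by (simp add: col_W)
    qed
  qed (use W in auto)
  then show "orthogonal_real_mat n W"
    using W orthonormal_cols_iff unfolding orthogonal_real_mat_def by blast
qed

lemma orthogonal_real_mat_extend_unit_vec:
  assumes v: "v \<in> carrier_vec n" "v \<bullet> v = 1"
  obtains W where "orthogonal_real_mat n W" "col W 0 = v"
proof -
  interpret cof_vec_space n "TYPE(real)" .
  have v0: "v \<noteq> 0\<^sub>v n"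
    using v by auto
  define b where "b = basis_completion v"
  from basis_completion[OF v(1) v0, folded b_def]
  have b: "distinct b" "\<not> lin_dep (set b)" "set b \<subseteq> carrier_vec n" "hd b = v" "length b = n"
    by auto
  have "n \<noteq> 0"
    using v v0 by auto
  then obtain vs where bv: "b = v # vs"
    using b by (cases b) auto
  define ws where "ws = gram_schmidt n b"
  from gram_schmidt_result[OF b(3,1,2) refl, folded ws_def]
  have ws: "set ws \<subseteq> carrier_vec n" "corthogonal ws" "length ws = n"
    by (auto simp: b)
  have "hd ws = v"
    using gram_schmidt_hd[OF v(1), of vs] unfolding ws_def bv .
  then have "ws ! 0 = v"
    using \<open>n \<noteq> 0\<close> ws(3) by (cases ws) auto
  then show thesis
    using orthogonal_real_mat_of_corthogonal(2)[OF ws, of 0] \<open>n \<noteq> 0\<close> v(2)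
    by (intro that[OF orthogonal_real_mat_of_corthogonal(1)[OF ws]]) simp
qed

lemma sym_mat_deflation:
  fixes A W :: "real mat"
  assumes A: "A \<in> carrier_mat (Suc m) (Suc m)" "A\<^sup>T = A"
    and W: "orthogonal_real_mat (Suc m) W"
    and eigen: "A *\<^sub>v col W 0 = e \<cdot>\<^sub>v col W 0"
  obtains A3 where "A3 \<in> carrier_mat m m" "A3\<^sup>T = A3"
    "W\<^sup>T * A * W = four_block_mat (mat 1 1 (\<lambda>_. e)) (0\<^sub>m 1 m) (0\<^sub>m m 1) A3"
proof -
  let ?n = "Suc m"
  define A' where "A' = W\<^sup>T * A * W"
  have Wc: "W \<in> carrier_mat ?n ?n" and cols: "orthonormal ?n ?n (col W)"
    using W orthogonal_real_mat_orthonormal_cols unfolding orthogonal_real_mat_def by auto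
  have A'c: "A' \<in> carrier_mat ?n ?n"
    using Wc A by (simp add: A'_def)
  have entry: "A' $$ (i, j) = col W i \<bullet> (A *\<^sub>v col W j)" if "i < ?n" "j < ?n" for i j
  proof -
    have "A' = W\<^sup>T * (A * W)"
      using Wc A by (simp add: A'_def assoc_mult_mat[of _ ?n ?n _ ?n _ ?n])
    then show ?thesis
      using Wc A that by (simp add: row_transpose col_mult2 del: col_mult)
  qed
  have sym: "A' $$ (i, j) = A' $$ (j, i)" if "i < ?n" "j < ?n" for i j
  proof -
    have "col W i \<bullet> (A *\<^sub>v col W j) = (A\<^sup>T *\<^sub>v col W i) \<bullet> col W j"
      using transpose_vec_mult_scalar[of A ?n ?n "col W j" "col W i"] Wc A that by simp
    also have "\<dots> = col W j \<bullet> (A *\<^sub>v col W i)"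
      using Wc A that by (simp add: comm_scalar_prod[of _ ?n])
    finally show ?thesis
      using entry that by simp
  qed
  have col0: "A' $$ (i, 0) = (if i = 0 then e else 0)" if "i < ?n" for i
    using entry[OF that] eigen cols that unfolding orthonormal_def by auto
  define A3 where "A3 = mat m m (\<lambda>(i, j). A' $$ (Suc i, Suc j))"
  have block: "A' = four_block_mat (mat 1 1 (\<lambda>_. e)) (0\<^sub>m 1 m) (0\<^sub>m m 1) A3"
  proof (rule eq_matI)
    fix i j assume "i < dim_row (four_block_mat (mat 1 1 (\<lambda>_. e)) (0\<^sub>m 1 m) (0\<^sub>m m 1) A3)"
      "j < dim_col (four_block_mat (mat 1 1 (\<lambda>_. e)) (0\<^sub>m 1 m) (0\<^sub>m m 1) A3)"
    then have ij: "i < ?n" "j < ?n"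
      by (auto simp: A3_def)
    show "A' $$ (i, j) = four_block_mat (mat 1 1 (\<lambda>_. e)) (0\<^sub>m 1 m) (0\<^sub>m m 1) A3 $$ (i, j)"
      using ij col0 sym[OF ij] col0[of j] by (cases i; cases j) (auto simp: A3_def)
  qed (use A'c in \<open>auto simp: A3_def\<close>)
  have "A3\<^sup>T = A3"
    using sym by (intro eq_matI) (auto simp: A3_def)
  then show thesis
    using that[of A3] block unfolding A'_def by (simp add: A3_def)
qed

lemma orthogonal_real_mat_block_diag:
  fixes U3 A3 :: "real mat"
  assumes U3: "orthogonal_real_mat m U3" and A3: "A3 \<in> carrier_mat m m"
  defines "B \<equiv> four_block_mat (1\<^sub>m 1) (0\<^sub>m 1 m) (0\<^sub>m m 1) U3"
  shows "orthogonal_real_mat (Suc m) B"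
    and "B\<^sup>T * four_block_mat (mat 1 1 (\<lambda>_. e)) (0\<^sub>m 1 m) (0\<^sub>m m 1) A3 * B
           = four_block_mat (mat 1 1 (\<lambda>_. e)) (0\<^sub>m 1 m) (0\<^sub>m m 1) (U3\<^sup>T * A3 * U3)"
proof -
  have U3c: "U3 \<in> carrier_mat m m" and U3tU3: "U3\<^sup>T * U3 = 1\<^sub>m m"
    using U3 unfolding orthogonal_real_mat_def by auto
  let ?E = "mat 1 1 (\<lambda>_. e) :: real mat"
  have block_mult: "four_block_mat X1 (0\<^sub>m 1 m) (0\<^sub>m m 1) Y1 * four_block_mat X2 (0\<^sub>m 1 m) (0\<^sub>m m 1) Y2
      = four_block_mat (X1 * X2) (0\<^sub>m 1 m) (0\<^sub>m m 1) (Y1 * Y2)"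
    if "X1 \<in> carrier_mat 1 1" "X2 \<in> carrier_mat 1 1" "Y1 \<in> carrier_mat m m" "Y2 \<in> carrier_mat m m"
    for X1 X2 Y1 Y2 :: "real mat"
    using that by (subst mult_four_block_mat[of _ 1 1 _ m _ m _ _ 1 _ m]) auto
  have Bt: "B\<^sup>T = four_block_mat (1\<^sub>m 1) (0\<^sub>m 1 m) (0\<^sub>m m 1) U3\<^sup>T"
    unfolding B_def using U3c by (subst transpose_four_block_mat[of _ 1 1 _ m _ m]) auto
  have "B\<^sup>T * B = four_block_mat (1\<^sub>m 1 * 1\<^sub>m 1) (0\<^sub>m 1 m) (0\<^sub>m m 1) (U3\<^sup>T * U3)"
    unfolding Bt unfolding B_def using U3c by (intro block_mult) auto
  also have "\<dots> = 1\<^sub>m (Suc m)"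
    using four_block_one_mat[of 1 m] by (simp add: U3tU3)
  finally show "orthogonal_real_mat (Suc m) B"
    unfolding orthogonal_real_mat_def B_def using U3c by auto
  have "B\<^sup>T * four_block_mat ?E (0\<^sub>m 1 m) (0\<^sub>m m 1) A3 * B
      = four_block_mat (1\<^sub>m 1 * ?E) (0\<^sub>m 1 m) (0\<^sub>m m 1) (U3\<^sup>T * A3) * B"
    unfolding Bt using U3c A3 by (subst block_mult) auto
  also have "\<dots> = four_block_mat (1\<^sub>m 1 * ?E * 1\<^sub>m 1) (0\<^sub>m 1 m) (0\<^sub>m m 1) (U3\<^sup>T * A3 * U3)"
    unfolding B_def using U3c A3 by (intro block_mult) auto
  finally show "B\<^sup>T * four_block_mat ?E (0\<^sub>m 1 m) (0\<^sub>m m 1) A3 * B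
      = four_block_mat ?E (0\<^sub>m 1 m) (0\<^sub>m m 1) (U3\<^sup>T * A3 * U3)"
    by simp
qed

lemma four_block_mat_diag_Cons:
  "four_block_mat (mat 1 1 (\<lambda>_. e)) (0\<^sub>m 1 m) (0\<^sub>m m 1) (mat_diag m (\<lambda>i. es ! i))
     = mat_diag (Suc m) (\<lambda>i. (e # es) ! i)"
  by (rule eq_matI) (auto simp: mat_diag_def nth_Cons split: nat.split)

lemma length_char_poly_linear_factors:
  fixes A :: "'a :: field mat"
  assumes "A \<in> carrier_mat n n" "char_poly A = (\<Prod>e\<leftarrow>es. [:-e, 1:])"
  shows "length es = n"
proof -
  have "Polynomial.degree (\<Prod>e\<leftarrow>es. [:-e, 1:] :: 'a poly) = length es"
  proof (induction es)
    case (Cons a es)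
    have "monic (\<Prod>e\<leftarrow>es. [:-e, 1:] :: 'a poly)"
      by (rule monic_prod_list) auto
    then have "(\<Prod>e\<leftarrow>es. [:-e, 1:] :: 'a poly) \<noteq> 0"
      by auto
    then have "Polynomial.degree (\<Prod>e\<leftarrow>a # es. [:-e, 1:])
        = Polynomial.degree [:-a, 1:] + Polynomial.degree (\<Prod>e\<leftarrow>es. [:-e, 1:])"
      unfolding list.map prod_list.Cons by (intro degree_mult_eq) auto
    then show ?case
      using Cons.IH by simp
  qed simp
  then show ?thesis
    using degree_monic_char_poly[OF assms(1)] assms(2) by simp
qed

lemma unit_eigenvector:
  fixes A :: "real mat"
  assumes A: "A \<in> carrier_mat n n" and "eigenvalue A e"
  obtains v where "v \<in> carrier_vec n" "v \<bullet> v = 1" "A *\<^sub>v v = e \<cdot>\<^sub>v v"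
proof -
  obtain w where "eigenvector A w e"
    using assms(2) unfolding eigenvalue_def by blast
  then have w: "w \<in> carrier_vec n" "w \<noteq> 0\<^sub>v n" "A *\<^sub>v w = e \<cdot>\<^sub>v w"
    using A unfolding eigenvector_def by auto
  have pos: "0 < w \<bullet> w"
    using w conjugate_square_greater_0_vec[of w n] by simp
  have "sqrt (w \<bullet> w) * sqrt (w \<bullet> w) = w \<bullet> w"
    using pos by simp
  then show thesis
    using w A pos by (intro that[of "(1 / sqrt (w \<bullet> w)) \<cdot>\<^sub>v w"]) (auto simp: mult_mat_vec)
qed

lemma char_poly_deflated_block:
  fixes A3 :: "'a :: field mat"
  assumes "A3 \<in> carrier_mat m m"
  shows "char_poly (four_block_mat (mat 1 1 (\<lambda>_. e)) (0\<^sub>m 1 m) (0\<^sub>m m 1) A3) = [:-e, 1:] * char_poly A3"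
proof -
  have "char_poly (mat 1 1 (\<lambda>_. e)) = [:-e, 1:]"
    by (simp add: char_poly_defs det_def sign_def)
  then show ?thesis
    using assms by (subst char_poly_four_block_zeros_col) auto
qed

lemma sym_mat_orthogonal_diagonalization:
  fixes A :: "real mat"
  assumes "A \<in> carrier_mat n n" "A\<^sup>T = A" "char_poly A = (\<Prod>e\<leftarrow>es. [:-e, 1:])"
  shows "\<exists>U. orthogonal_real_mat n U \<and> U\<^sup>T * A * U = mat_diag n (\<lambda>i. es ! i)"
  using assms
proof (induction es arbitrary: n A)
  case Nil
  then have "n = 0"
    using length_char_poly_linear_factors[OF Nil.prems(1,3)] by simp
  then show ?case
    using Nil.prems(1) unfolding orthogonal_real_mat_def
    by (intro exI[of _ "1\<^sub>m 0"]) (auto simp: mat_diag_def intro!: eq_matI)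
next
  case (Cons e es)
  obtain m where n: "n = Suc m"
    using length_char_poly_linear_factors[OF Cons.prems(1,3)] by (cases n) auto
  have A: "A \<in> carrier_mat (Suc m) (Suc m)"
    using Cons.prems(1) n by simp
  have "eigenvalue A e"
    using eigenvalue_root_char_poly[OF A] Cons.prems(3) by simp
  then obtain v where v: "v \<in> carrier_vec (Suc m)" "v \<bullet> v = 1" "A *\<^sub>v v = e \<cdot>\<^sub>v v"
    using unit_eigenvector[OF A] by blast
  obtain W where W: "orthogonal_real_mat (Suc m) W" "col W 0 = v"
    using orthogonal_real_mat_extend_unit_vec[OF v(1,2)] by blast
  obtain A3 where A3: "A3 \<in> carrier_mat m m" "A3\<^sup>T = A3"
    and block: "W\<^sup>T * A * W = four_block_mat (mat 1 1 (\<lambda>_. e)) (0\<^sub>m 1 m) (0\<^sub>m m 1) A3"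
    using sym_mat_deflation[OF A Cons.prems(2) W(1)] W(2) v(3) by blast
  have "[:-e, 1:] * char_poly A3 = [:-e, 1:] * (\<Prod>e\<leftarrow>es. [:-e, 1:])"
    using char_poly_similar[OF orthogonal_real_mat_congruence_similar[OF W(1) A]]
      Cons.prems(3) char_poly_deflated_block[OF A3(1), of e] block by simp
  then have "char_poly A3 = (\<Prod>e\<leftarrow>es. [:-e, 1:])"
    by (metis mult_cancel_left pCons_eq_0_iff zero_neq_one)
  then obtain U3 where U3: "orthogonal_real_mat m U3" "U3\<^sup>T * A3 * U3 = mat_diag m (\<lambda>i. es ! i)"
    using Cons.IH A3 by blast
  define B where "B = four_block_mat (1\<^sub>m 1) (0\<^sub>m 1 m) (0\<^sub>m m 1) U3"
  have B: "orthogonal_real_mat (Suc m) B"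
    and BAB: "B\<^sup>T * (W\<^sup>T * A * W) * B
      = four_block_mat (mat 1 1 (\<lambda>_. e)) (0\<^sub>m 1 m) (0\<^sub>m m 1) (mat_diag m (\<lambda>i. es ! i))"
    using orthogonal_real_mat_block_diag(1)[OF U3(1) A3(1), folded B_def]
      orthogonal_real_mat_block_diag(2)[OF U3(1) A3(1), of e, folded B_def] block U3(2) by auto
  have "(W * B)\<^sup>T * A * (W * B) = mat_diag (Suc m) (\<lambda>i. (e # es) ! i)"
    using congruence_mult[of W "Suc m" B A] W(1) B A BAB four_block_mat_diag_Cons
    unfolding orthogonal_real_mat_def by simp
  then show ?case
    using orthogonal_real_mat_mult[OF W(1) B] n by blast
qed

lemma sym_mat_complex_eigenvalue_real:
  fixes A :: "real mat"
  assumes A: "A \<in> carrier_mat n n" "A\<^sup>T = A"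
    and ev: "eigenvalue (map_mat complex_of_real A) a"
  shows "cnj a = a"
proof -
  let ?B = "map_mat complex_of_real A"
  have B: "?B \<in> carrier_mat n n"
    using A by simp
  obtain v where "eigenvector ?B v a"
    using ev unfolding eigenvalue_def by blast
  then have v: "v \<in> carrier_vec n" "v \<noteq> 0\<^sub>v n" "?B *\<^sub>v v = a \<cdot>\<^sub>v v"
    using B unfolding eigenvector_def by auto
  define N where "N = conjugate v \<bullet> v"
  have N_cnj: "cnj N = N"
    using v(1) conjugate_conjugate_sprod[of v n v] conjugate_vec_sprod_comm[of v n v]
    by (simp add: N_def)
  have N_nonzero: "N \<noteq> 0"
    using v conjugate_square_eq_0_vec[of v n] conjugate_vec_sprod_comm[of v n v] by (simp add: N_def)
  define s where "s = conjugate v \<bullet> (?B *\<^sub>v v)"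
  have s_sum: "s = (\<Sum>i<n. \<Sum>j<n. cnj (v $ i) * ?B $$ (i, j) * v $ j)"
    unfolding s_def using v(1) B by (subst bilinear_form_sum[of _ n]) auto
  \<comment> \<open>Since the entries of ?B are real and symmetric, the Hermitian form s is real.\<close>
  have "cnj s = (\<Sum>i<n. \<Sum>j<n. v $ i * ?B $$ (i, j) * cnj (v $ j))"
    unfolding s_sum cnj_sum using A by (simp add: mult_ac)
  also have "\<dots> = (\<Sum>j<n. \<Sum>i<n. v $ i * ?B $$ (i, j) * cnj (v $ j))"
    by (rule sum.swap)
  also have "\<dots> = s"
    unfolding s_sum using A symmetric_mat_entry[OF A] by (intro sum.cong refl) (auto simp: mult_ac)
  finally have "cnj s = s" .
  moreover have "s = a * N"
    using v B by (simp add: s_def N_def)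
  ultimately have "cnj a * N = a * N"
    using N_cnj by (metis complex_cnj_mult)
  then show ?thesis
    using N_nonzero by simp
qed

interpretation complex_of_real_poly: map_poly_inj_idom_hom complex_of_real ..

lemma sym_mat_char_poly_splits:
  fixes A :: "real mat"
  assumes A: "A \<in> carrier_mat n n" and sym: "A\<^sup>T = A"
  obtains es where "char_poly A = (\<Prod>e\<leftarrow>es. [:-e, 1:])"
proof -
  let ?Ac = "map_mat complex_of_real A"
  have Ac: "?Ac \<in> carrier_mat n n"
    using A by simp
  obtain as where as: "char_poly ?Ac = (\<Prod>a\<leftarrow>as. [:-a, 1:])"
    using char_poly_factorized[OF Ac] by blast
  have real: "complex_of_real (Re a) = a" if "a \<in> set as" for a
  proof -
    have "eigenvalue ?Ac a"
      unfolding eigenvalue_root_char_poly[OF Ac] as using that by (rule linear_poly_root)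
    then have "cnj a = a"
      by (rule sym_mat_complex_eigenvalue_real[OF A sym])
    then show ?thesis
      by (simp add: complex_eq_iff)
  qed
  have "map_poly complex_of_real (char_poly A) = char_poly ?Ac"
    by (rule of_real_hom.char_poly_hom[OF A, symmetric])
  also have "\<dots> = (\<Prod>a\<leftarrow>as. [:-complex_of_real (Re a), 1:])"
    unfolding as using real by (metis (no_types, lifting) map_eq_conv)
  also have "\<dots> = map_poly complex_of_real (\<Prod>r\<leftarrow>map Re as. [:-r, 1:])"
    by (simp add: complex_of_real_poly.hom_prod_list o_def)
  finally show thesis
    using that complex_of_real_poly.eq_iff by blast
qed

lemma proots_prod_linear_factors:
  "proots (\<Prod>e\<leftarrow>es. [:-e, 1:]) = mset (es :: 'a :: idom list)"
proof (induction es)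
  case (Cons a es)
  have "monic (\<Prod>e\<leftarrow>es. [:-e, 1:] :: 'a poly)"
    by (rule monic_prod_list) auto
  then have "proots (\<Prod>e\<leftarrow>a # es. [:-e, 1:]) = proots [:-a, 1:] + proots (\<Prod>e\<leftarrow>es. [:-e, 1:])"
    unfolding list.map prod_list.Cons by (intro proots_mult) auto
  then show ?case
    using Cons.IH proots_linear_factor[of "-a"] by simp
qed simp

lemma eigenvalues_desc_antimono:
  assumes "i \<le> j" "j < length (eigenvalues_desc A)"
  shows "eigenvalues_desc A ! j \<le> eigenvalues_desc A ! i"
proof -
  define s where "s = sorted_list_of_multiset (proots (char_poly A))"
  have s: "sorted s" "eigenvalues_desc A = rev s"
    by (simp_all add: s_def eigenvalues_desc_def)
  have "s ! (length s - Suc j) \<le> s ! (length s - Suc i)"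
    using assms s by (intro sorted_nth_mono[OF s(1)]) auto
  then show ?thesis
    using assms s by (simp add: rev_nth)
qed

lemma char_poly_eigenvalues_desc:
  assumes "char_poly A = (\<Prod>e\<leftarrow>es. [:-e, 1:])"
  shows "char_poly A = (\<Prod>e\<leftarrow>eigenvalues_desc A. [:-e, 1:])"
proof -
  have "mset (eigenvalues_desc A) = mset es"
    by (simp add: eigenvalues_desc_def assms proots_prod_linear_factors)
  then show ?thesis
    using assms by (metis mset_map prod_mset_prod_list)
qed

theorem sym_mat_orthonormal_eigenbasis:
  fixes A :: "real mat"
  assumes A: "A \<in> carrier_mat n n" and sym: "A\<^sup>T = A"
  obtains u where "orthonormal n n u" "\<And>j. j < n \<Longrightarrow> A *\<^sub>v u j = eigenvalues_desc A ! j \<cdot>\<^sub>v u j"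
proof -
  let ?D = "mat_diag n (\<lambda>i. eigenvalues_desc A ! i)"
  obtain es where "char_poly A = (\<Prod>e\<leftarrow>es. [:-e, 1:])"
    using sym_mat_char_poly_splits[OF A sym] .
  then obtain U where U: "orthogonal_real_mat n U" "U\<^sup>T * A * U = ?D"
    using sym_mat_orthogonal_diagonalization[OF A sym] char_poly_eigenvalues_desc by blast
  have Uc: "U \<in> carrier_mat n n"
    using U unfolding orthogonal_real_mat_def by simp
  have "U * ?D = (U * U\<^sup>T) * A * U"
    using Uc A by (simp add: U(2)[symmetric] assoc_mult_mat[of _ n n _ n _ n])
  then have AU: "A * U = U * ?D"
    using A Uc by (simp add: orthogonal_real_mat_right_inverse[OF U(1)])
  have "A *\<^sub>v col U j = eigenvalues_desc A ! j \<cdot>\<^sub>v col U j" if "j < n" for j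
  proof -
    have "A *\<^sub>v col U j = col (U * ?D) j"
      using A Uc that by (simp add: AU[symmetric] col_mult2 del: col_mult)
    also have "\<dots> = eigenvalues_desc A ! j \<cdot>\<^sub>v col U j"
      using Uc that by (auto simp: mat_diag_mult_right[OF Uc] intro!: eq_vecI)
    finally show ?thesis .
  qed
  then show thesis
    using that orthogonal_real_mat_orthonormal_cols[OF U(1)] by blast
qed

lemma length_eigenvalues_desc:
  fixes A :: "real mat"
  assumes "A \<in> carrier_mat n n" "A\<^sup>T = A"
  shows "length (eigenvalues_desc A) = n"
proof -
  obtain es where "char_poly A = (\<Prod>e\<leftarrow>es. [:-e, 1:])"
    using sym_mat_char_poly_splits[OF assms] .
  then show ?thesis
    using length_char_poly_linear_factors[OF assms(1)] char_poly_eigenvalues_desc by blast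
qed

section \<open>Eigenbasis expansions and Ky Fan's maximum principle\<close>

context
  fixes n :: nat and A :: "real mat" and u :: "nat \<Rightarrow> real vec" and ev :: "nat \<Rightarrow> real"
  assumes A: "A \<in> carrier_mat n n" "A\<^sup>T = A"
    and u: "orthonormal n n u"
    and eigen: "\<And>j. j < n \<Longrightarrow> A *\<^sub>v u j = ev j \<cdot>\<^sub>v u j"
begin

lemma eigenbasis_quadratic_form:
  assumes z: "z \<in> carrier_vec n"
  shows "z \<bullet> (A *\<^sub>v z) = (\<Sum>i<n. ev i * (u i \<bullet> z)\<^sup>2)"
proof -
  have "u i \<bullet> (A *\<^sub>v z) = ev i * (u i \<bullet> z)" if "i < n" for i
  proof -
    have "u i \<bullet> (A *\<^sub>v z) = (A\<^sup>T *\<^sub>v u i) \<bullet> z"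
      using transpose_vec_mult_scalar[of A n n z "u i"] A z orthonormalD(1)[OF u that] by simp
    then show ?thesis
      using A eigen that z orthonormalD(1)[OF u that] by simp
  qed
  then have "z \<bullet> (A *\<^sub>v z) = (\<Sum>i<n. (u i \<bullet> z) * (ev i * (u i \<bullet> z)))"
    using orthonormal_parseval[OF u z, of "A *\<^sub>v z"] A z by simp
  then show ?thesis
    by (simp add: power2_eq_square mult_ac)
qed

lemma eigenbasis_trace: "(\<Sum>a<n. A $$ (a, a)) = (\<Sum>i<n. ev i)"
proof -
  have "A $$ (a, a) = (\<Sum>i<n. ev i * (u i $ a)\<^sup>2)" if "a < n" for a
  proof -
    have "A $$ (a, a) = unit_vec n a \<bullet> (A *\<^sub>v unit_vec n a)"
      using A that by simp
    then show ?thesis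
      using eigenbasis_quadratic_form[of "unit_vec n a"] that by simp
  qed
  then have "(\<Sum>a<n. A $$ (a, a)) = (\<Sum>a<n. \<Sum>i<n. ev i * (u i $ a)\<^sup>2)"
    by simp
  also have "\<dots> = (\<Sum>i<n. ev i * (\<Sum>a<n. (u i $ a)\<^sup>2))"
    by (subst sum.swap) (simp add: sum_distrib_left)
  also have "\<dots> = (\<Sum>i<n. ev i)"
    using orthonormalD[OF u] by (simp add: scalar_prod_self_sum[symmetric])
  finally show ?thesis .
qed

lemma eigenbasis_frobenius: "(\<Sum>a<n. \<Sum>b<n. (A $$ (a, b))\<^sup>2) = (\<Sum>i<n. (ev i)\<^sup>2)"
proof -
  have "(\<Sum>b<n. (A $$ (a, b))\<^sup>2) = (\<Sum>i<n. (ev i)\<^sup>2 * (u i $ a)\<^sup>2)" if a: "a < n" for a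
  proof -
    have row: "row A a \<in> carrier_vec n"
      using A(1) unfolding row_def by simp
    have "u i \<bullet> row A a = ev i * u i $ a" if "i < n" for i
    proof -
      have "u i \<bullet> row A a = (A *\<^sub>v u i) $ a"
        using comm_scalar_prod[OF orthonormalD(1)[OF u that] row] A a by simp
      then show ?thesis
        using eigen[OF that] orthonormalD(1)[OF u that] a by simp
    qed
    then have "(\<Sum>i<n. (u i \<bullet> row A a) * (u i \<bullet> row A a)) = (\<Sum>i<n. (ev i)\<^sup>2 * (u i $ a)\<^sup>2)"
      by (simp add: power2_eq_square mult_ac)
    then show ?thesis
      using orthonormal_parseval[OF u row row] scalar_prod_self_sum[OF row] A a by simp
  qed
  then have "(\<Sum>a<n. \<Sum>b<n. (A $$ (a, b))\<^sup>2) = (\<Sum>a<n. \<Sum>i<n. (ev i)\<^sup>2 * (u i $ a)\<^sup>2)"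
    by simp
  also have "\<dots> = (\<Sum>i<n. (ev i)\<^sup>2 * (\<Sum>a<n. (u i $ a)\<^sup>2))"
    by (subst sum.swap) (simp add: sum_distrib_left)
  also have "\<dots> = (\<Sum>i<n. (ev i)\<^sup>2)"
    using orthonormalD[OF u] by (simp add: scalar_prod_self_sum[symmetric])
  finally show ?thesis .
qed

end

lemma S_k_eq_sum:
  assumes "k \<le> length (eigenvalues_desc A)"
  shows "S_k k A = (\<Sum>i<k. eigenvalues_desc A ! i)"
  using assms unfolding S_k_def by (simp add: sum_list_sum_nth atLeast0LessThan min_absorb2)

lemma weighted_sum_le_prefix_sum:
  fixes l w :: "nat \<Rightarrow> real"
  assumes antimono: "\<And>i j. i \<le> j \<Longrightarrow> j < n \<Longrightarrow> l j \<le> l i"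
    and w: "\<And>i. i < n \<Longrightarrow> 0 \<le> w i \<and> w i \<le> 1"
    and total: "(\<Sum>i<n. w i) = real k" and k: "k \<le> n"
  shows "(\<Sum>i<n. l i * w i) \<le> (\<Sum>i<k. l i)"
proof -
  \<comment> \<open>Shifting by the k-th term t makes the first k terms nonnegative and the others nonpositive.\<close>
  define t where "t = l (k - 1)"
  have "(\<Sum>i<n. l i * w i) = (\<Sum>i<n. (l i - t) * w i) + t * real k"
    using total by (simp add: algebra_simps sum.distrib sum_distrib_left[symmetric] sum_subtractf)
  also have "(\<Sum>i<n. (l i - t) * w i) \<le> (\<Sum>i<n. if i < k then l i - t else 0)"
  proof (rule sum_mono)
    fix i assume "i \<in> {..<n}"
    then have i: "i < n"
      by simp
    show "(l i - t) * w i \<le> (if i < k then l i - t else 0)"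
    proof (cases "i < k")
      case True
      then have "t \<le> l i"
        unfolding t_def using k i by (intro antimono) auto
      then show ?thesis
        using True w[OF i] by (simp add: mult_left_le)
    next
      case False
      then have "l i \<le> t"
        unfolding t_def using k i by (intro antimono) auto
      then show ?thesis
        using False w[OF i] by (simp add: mult_nonpos_nonneg)
    qed
  qed
  also have "(\<Sum>i<n. if i < k then l i - t else 0) = (\<Sum>i<k. l i - t)"
  proof -
    have "(\<Sum>i<n. if i < k then l i - t else 0) = (\<Sum>i\<in>{..<n} \<inter> {i. i < k}. l i - t)"
      by (simp add: sum.inter_restrict)
    also have "{..<n} \<inter> {i. i < k} = {..<k}"
      using k by auto
    finally show ?thesis .
  qed
  finally show ?thesis
    by (simp add: sum_subtractf)
qed

theorem ky_fan_le_S_k: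
  fixes A :: "real mat"
  assumes A: "A \<in> carrier_mat n n" "A\<^sup>T = A" and x: "orthonormal n k x" and k: "k \<le> n"
  shows "(\<Sum>j<k. x j \<bullet> (A *\<^sub>v x j)) \<le> S_k k A"
proof -
  let ?ev = "eigenvalues_desc A"
  obtain u where u: "orthonormal n n u" and eigen: "\<And>j. j < n \<Longrightarrow> A *\<^sub>v u j = ?ev ! j \<cdot>\<^sub>v u j"
    using sym_mat_orthonormal_eigenbasis[OF A] by blast
  have len: "length ?ev = n"
    by (rule length_eigenvalues_desc[OF A])
  define w where "w i = (\<Sum>j<k. (u i \<bullet> x j)\<^sup>2)" for i
  have "(\<Sum>j<k. x j \<bullet> (A *\<^sub>v x j)) = (\<Sum>j<k. \<Sum>i<n. ?ev ! i * (u i \<bullet> x j)\<^sup>2)"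
    using eigenbasis_quadratic_form[OF A u eigen] orthonormalD(1)[OF x] by simp
  also have "\<dots> = (\<Sum>i<n. ?ev ! i * w i)"
    unfolding w_def by (simp add: sum_distrib_left sum.swap[of _ "{..<k}"])
  also have "\<dots> \<le> (\<Sum>i<k. ?ev ! i)"
  proof (rule weighted_sum_le_prefix_sum[where l = "\<lambda>i. ?ev ! i" and w = w, OF _ _ _ k])
    show "?ev ! j \<le> ?ev ! i" if "i \<le> j" "j < n" for i j
      using eigenvalues_desc_antimono that len by simp
    show "0 \<le> w i \<and> w i \<le> 1" if "i < n" for i
    proof -
      have "w i = (\<Sum>j<k. (x j \<bullet> u i)\<^sup>2)"
        unfolding w_def using orthonormalD(1)[OF u that] orthonormalD(1)[OF x]
        by (intro sum.cong refl) (simp add: comm_scalar_prod[of _ n])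
      also have "\<dots> \<le> 1"
        using orthonormal_bessel[OF x orthonormalD(1)[OF u that]] orthonormalD(2)[OF u that] by simp
      finally show ?thesis
        unfolding w_def by (simp add: sum_nonneg)
    qed
    have "(\<Sum>i<n. w i) = (\<Sum>j<k. \<Sum>i<n. (u i \<bullet> x j) * (u i \<bullet> x j))"
      unfolding w_def by (simp add: sum.swap[of _ "{..<n}"] power2_eq_square)
    also have "\<dots> = (\<Sum>j<k. 1)"
      using orthonormal_parseval[OF u] orthonormalD[OF x] by simp
    finally show "(\<Sum>i<n. w i) = real k"
      by simp
  qed
  also have "\<dots> = S_k k A"
    using S_k_eq_sum[of k A] len k by simp
  finally show ?thesis .
qed

lemma ky_fan_attained:
  fixes A :: "real mat"
  assumes A: "A \<in> carrier_mat n n" "A\<^sup>T = A" and k: "k \<le> n"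
  obtains x where "orthonormal n k x" "(\<Sum>j<k. x j \<bullet> (A *\<^sub>v x j)) = S_k k A"
proof -
  let ?ev = "eigenvalues_desc A"
  obtain u where u: "orthonormal n n u" and eigen: "\<And>j. j < n \<Longrightarrow> A *\<^sub>v u j = ?ev ! j \<cdot>\<^sub>v u j"
    using sym_mat_orthonormal_eigenbasis[OF A] by blast
  have "u j \<bullet> (A *\<^sub>v u j) = ?ev ! j" if "j < n" for j
    using eigen[OF that] orthonormalD[OF u that] by simp
  then have "(\<Sum>j<k. u j \<bullet> (A *\<^sub>v u j)) = S_k k A"
    using S_k_eq_sum[of k A] length_eigenvalues_desc[OF A] k by simp
  then show thesis
    using that orthonormal_mono[OF u k] by blast
qed

lemma S_k_lincomb_le:
  fixes X Y :: "real mat"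
  assumes X: "X \<in> carrier_mat n n" "X\<^sup>T = X" and Y: "Y \<in> carrier_mat n n" "Y\<^sup>T = Y"
    and ab: "0 \<le> a" "0 \<le> b" and k: "k \<le> n"
  shows "S_k k (a \<cdot>\<^sub>m X + b \<cdot>\<^sub>m Y) \<le> a * S_k k X + b * S_k k Y"
proof -
  let ?Z = "a \<cdot>\<^sub>m X + b \<cdot>\<^sub>m Y"
  have Z: "?Z \<in> carrier_mat n n" "?Z\<^sup>T = ?Z"
    using X Y lincomb_symmetric by auto
  obtain x where x: "orthonormal n k x" and S: "(\<Sum>j<k. x j \<bullet> (?Z *\<^sub>v x j)) = S_k k ?Z"
    using ky_fan_attained[OF Z k] .
  have "S_k k ?Z = a * (\<Sum>j<k. x j \<bullet> (X *\<^sub>v x j)) + b * (\<Sum>j<k. x j \<bullet> (Y *\<^sub>v x j))"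
    using S[symmetric] quadratic_form_lincomb[OF X(1) Y(1)] orthonormalD(1)[OF x]
    by (simp add: sum.distrib sum_distrib_left)
  also have "\<dots> \<le> a * S_k k X + b * S_k k Y"
    by (intro add_mono mult_left_mono ky_fan_le_S_k[OF X x k] ky_fan_le_S_k[OF Y x k] ab)
  finally show ?thesis .
qed

lemma S_k_le_of_quadratic_form_le:
  fixes X :: "real mat"
  assumes X: "X \<in> carrier_mat n n" "X\<^sup>T = X" and k: "k \<le> n"
    and bound: "\<And>x. x \<in> carrier_vec n \<Longrightarrow> x \<bullet> (X *\<^sub>v x) \<le> \<beta> * (x \<bullet> x)"
  shows "S_k k X \<le> real k * \<beta>"
proof -
  obtain x where x: "orthonormal n k x" and S: "(\<Sum>j<k. x j \<bullet> (X *\<^sub>v x j)) = S_k k X"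
    using ky_fan_attained[OF X k] .
  have "(\<Sum>j<k. x j \<bullet> (X *\<^sub>v x j)) \<le> (\<Sum>j<k. \<beta>)"
    using bound orthonormalD[OF x] by (intro sum_mono) fastforce
  then show ?thesis
    using S by simp
qed

lemma S_k_ge_of_quadratic_form_ge:
  fixes X :: "real mat"
  assumes X: "X \<in> carrier_mat n n" "X\<^sup>T = X" and k: "1 \<le> k" "k \<le> n"
    and z: "z \<in> carrier_vec n" "z \<bullet> z = 1"
    and bound: "\<And>x. x \<in> carrier_vec n \<Longrightarrow> c * (x \<bullet> x) \<le> x \<bullet> (X *\<^sub>v x)"
  shows "z \<bullet> (X *\<^sub>v z) + (real k - 1) * c \<le> S_k k X"
proof -
  obtain W where W: "orthogonal_real_mat n W" "col W 0 = z"
    using orthogonal_real_mat_extend_unit_vec[OF z] by blast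
  have x: "orthonormal n k (col W)"
    using orthonormal_mono[OF orthogonal_real_mat_orthonormal_cols[OF W(1)] k(2)] .
  obtain m where m: "k = Suc m"
    using k by (cases k) auto
  have "(\<Sum>j<m. c) \<le> (\<Sum>j<m. col W (Suc j) \<bullet> (X *\<^sub>v col W (Suc j)))"
    using bound orthonormalD[OF x] m by (intro sum_mono) fastforce
  moreover have "(\<Sum>j<k. col W j \<bullet> (X *\<^sub>v col W j))
      = z \<bullet> (X *\<^sub>v z) + (\<Sum>j<m. col W (Suc j) \<bullet> (X *\<^sub>v col W (Suc j)))"
    unfolding m W(2)[symmetric] by (rule sum.lessThan_Suc_shift)
  ultimately have "z \<bullet> (X *\<^sub>v z) + (real k - 1) * c \<le> (\<Sum>j<k. col W j \<bullet> (X *\<^sub>v col W j))"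
    using m by simp
  also have "\<dots> \<le> S_k k X"
    by (rule ky_fan_le_S_k[OF X x k(2)])
  finally show ?thesis .
qed

lemma S_k_dim_eq_trace:
  fixes A :: "real mat"
  assumes A: "A \<in> carrier_mat n n" "A\<^sup>T = A"
  shows "S_k n A = (\<Sum>a<n. A $$ (a, a))"
proof -
  obtain u where u: "orthonormal n n u"
    and eigen: "\<And>j. j < n \<Longrightarrow> A *\<^sub>v u j = eigenvalues_desc A ! j \<cdot>\<^sub>v u j"
    using sym_mat_orthonormal_eigenbasis[OF A] by blast
  show ?thesis
    using eigenbasis_trace[OF A u eigen] S_k_eq_sum[of n A] length_eigenvalues_desc[OF A] by simp
qed

lemma square_sum_le_card_mult_sum_squares:
  fixes f :: "nat \<Rightarrow> real"
  shows "(\<Sum>j<k. f j)\<^sup>2 \<le> real k * (\<Sum>j<k. (f j)\<^sup>2)"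
proof -
  have "0 \<le> (\<Sum>j<k. \<Sum>l<k. (f j - f l)\<^sup>2)"
    by (intro sum_nonneg) auto
  also have "\<dots> = 2 * (real k * (\<Sum>j<k. (f j)\<^sup>2)) - 2 * (\<Sum>j<k. f j)\<^sup>2"
    by (simp add: power2_diff sum.distrib sum_subtractf sum_distrib_left sum_distrib_right
        power2_eq_square sum_product algebra_simps)
  finally show ?thesis
    by simp
qed

lemma S_k_sq_le_frobenius:
  fixes A :: "real mat"
  assumes A: "A \<in> carrier_mat n n" "A\<^sup>T = A" and k: "k \<le> n"
  shows "(S_k k A)\<^sup>2 \<le> real k * (\<Sum>a<n. \<Sum>b<n. (A $$ (a, b))\<^sup>2)"
proof -
  let ?ev = "eigenvalues_desc A"
  obtain u where u: "orthonormal n n u" and eigen: "\<And>j. j < n \<Longrightarrow> A *\<^sub>v u j = ?ev ! j \<cdot>\<^sub>v u j"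
    using sym_mat_orthonormal_eigenbasis[OF A] by blast
  have "(S_k k A)\<^sup>2 = (\<Sum>j<k. ?ev ! j)\<^sup>2"
    using S_k_eq_sum[of k A] length_eigenvalues_desc[OF A] k by simp
  also have "\<dots> \<le> real k * (\<Sum>j<k. (?ev ! j)\<^sup>2)"
    by (rule square_sum_le_card_mult_sum_squares)
  also have "\<dots> \<le> real k * (\<Sum>j<n. (?ev ! j)\<^sup>2)"
    using k by (intro mult_left_mono sum_mono2) auto
  also have "\<dots> = real k * (\<Sum>a<n. \<Sum>b<n. (A $$ (a, b))\<^sup>2)"
    using eigenbasis_frobenius[OF A u eigen] by simp
  finally show ?thesis .
qed

section \<open>Spectral sums of graph matrices\<close>

lemma complement_simple_graph: "simple_graph n E \<Longrightarrow> simple_graph n (complement E)"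
  unfolding simple_graph_def complement_def by auto

lemma adj_mat_carrier [simp]: "adj_mat n E \<in> carrier_mat n n"
  unfolding adj_mat_def by simp

lemma deg_mat_carrier [simp]: "deg_mat n E \<in> carrier_mat n n"
  unfolding deg_mat_def by simp

lemma A_alpha_carrier [simp]: "A_alpha \<alpha> n E \<in> carrier_mat n n"
  unfolding A_alpha_def by simp

lemma adj_mat_symmetric: "simple_graph n E \<Longrightarrow> (adj_mat n E)\<^sup>T = adj_mat n E"
  unfolding simple_graph_def adj_mat_def by (intro eq_matI) auto

lemma deg_mat_symmetric: "(deg_mat n E)\<^sup>T = deg_mat n E"
  unfolding deg_mat_def by (intro eq_matI) auto

lemma A_alpha_symmetric: "simple_graph n E \<Longrightarrow> (A_alpha \<alpha> n E)\<^sup>T = A_alpha \<alpha> n E"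
  unfolding A_alpha_def
  by (intro lincomb_symmetric[of _ n]) (simp_all add: adj_mat_symmetric deg_mat_symmetric)

lemma degree_complement:
  assumes E: "simple_graph n E" and i: "i < n"
  shows "real (degree n (complement E) i) = real n - 1 - real (degree n E i)"
proof -
  have nbrs: "{j. j < n \<and> E i j} \<subseteq> {..<n} - {i}"
    using E i unfolding simple_graph_def by auto
  have "{j. j < n \<and> complement E i j} = ({..<n} - {i}) - {j. j < n \<and> E i j}"
    unfolding complement_def by auto
  then have "card {j. j < n \<and> complement E i j} = (n - 1) - card {j. j < n \<and> E i j}"
    using nbrs i by (simp add: card_Diff_subset)
  moreover have "card {j. j < n \<and> E i j} \<le> n - 1"
    using card_mono[OF _ nbrs] i by simp
  ultimately show ?thesis
    unfolding degree_def using i by (simp add: of_nat_diff)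
qed

lemma deg_mat_quadratic_form:
  assumes "x \<in> carrier_vec n"
  shows "x \<bullet> (deg_mat n E *\<^sub>v x) = (\<Sum>i<n. real (degree n E i) * (x $ i)\<^sup>2)"
proof -
  have "x \<bullet> (deg_mat n E *\<^sub>v x)
      = (\<Sum>i<n. \<Sum>j<n. x $ i * (if i = j then real (degree n E i) else 0) * x $ j)"
    using assms by (simp add: bilinear_form_sum[of _ n] deg_mat_def)
  also have "\<dots> = (\<Sum>i<n. \<Sum>j<n. if i = j then real (degree n E i) * (x $ i)\<^sup>2 else 0)"
    by (intro sum.cong refl) (auto simp: power2_eq_square)
  finally show ?thesis
    by simp
qed

lemma deg_mat_quadratic_form_le:
  assumes x: "x \<in> carrier_vec n" and d: "\<And>i. i < n \<Longrightarrow> real (degree n E i) \<le> d"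
  shows "x \<bullet> (deg_mat n E *\<^sub>v x) \<le> d * (x \<bullet> x)"
proof -
  have "(\<Sum>i<n. real (degree n E i) * (x $ i)\<^sup>2) \<le> (\<Sum>i<n. d * (x $ i)\<^sup>2)"
    using d by (intro sum_mono mult_right_mono) auto
  then show ?thesis
    using x by (simp add: deg_mat_quadratic_form scalar_prod_self_sum sum_distrib_left)
qed

lemma deg_mat_add_complement_quadratic_form:
  assumes E: "simple_graph n E" and x: "x \<in> carrier_vec n"
  shows "x \<bullet> (deg_mat n E *\<^sub>v x) + x \<bullet> (deg_mat n (complement E) *\<^sub>v x) = (real n - 1) * (x \<bullet> x)"
  using x by (simp add: deg_mat_quadratic_form degree_complement[OF E] scalar_prod_self_sum
      sum_distrib_left algebra_simps flip: sum.distrib)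

lemma adj_mat_add_complement_quadratic_form:
  assumes E: "simple_graph n E" and x: "x \<in> carrier_vec n"
  shows "x \<bullet> (adj_mat n E *\<^sub>v x) + x \<bullet> (adj_mat n (complement E) *\<^sub>v x)
    = (\<Sum>i<n. x $ i)\<^sup>2 - x \<bullet> x"
proof -
  have "x \<bullet> (adj_mat n E *\<^sub>v x) + x \<bullet> (adj_mat n (complement E) *\<^sub>v x)
      = (\<Sum>i<n. \<Sum>j<n. x $ i * ((if E i j then 1 else 0) + (if complement E i j then 1 else 0)) * x $ j)"
    using x by (simp add: bilinear_form_sum[of _ n] adj_mat_def sum.distrib algebra_simps)
  also have "\<dots> = (\<Sum>i<n. \<Sum>j<n. x $ i * x $ j - (if i = j then x $ i * x $ j else 0))"
    using E unfolding simple_graph_def by (intro sum.cong refl) (auto simp: complement_def)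
  also have "\<dots> = (\<Sum>i<n. x $ i)\<^sup>2 - x \<bullet> x"
    using x by (simp add: sum_subtractf power2_eq_square sum_product scalar_prod_sum)
  finally show ?thesis .
qed

lemma adj_mat_add_complement_frobenius:
  assumes E: "simple_graph n E"
  shows "(\<Sum>a<n. \<Sum>b<n. (adj_mat n E $$ (a, b))\<^sup>2)
    + (\<Sum>a<n. \<Sum>b<n. (adj_mat n (complement E) $$ (a, b))\<^sup>2) = real n * real n - real n"
proof -
  have "(\<Sum>a<n. \<Sum>b<n. (adj_mat n E $$ (a, b))\<^sup>2)
      + (\<Sum>a<n. \<Sum>b<n. (adj_mat n (complement E) $$ (a, b))\<^sup>2)
      = (\<Sum>a<n. \<Sum>b<n. 1 - (if a = b then 1 else 0))"
    unfolding sum.distrib[symmetric] adj_mat_def using E unfolding simple_graph_def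
    by (intro sum.cong refl) (auto simp: complement_def)
  then show ?thesis
    by (simp add: sum_subtractf algebra_simps)
qed

lemma adj_mat_trace: "simple_graph n E \<Longrightarrow> (\<Sum>a<n. adj_mat n E $$ (a, a)) = 0"
  unfolding simple_graph_def adj_mat_def by simp

lemma two_k_n_n_minus_1_le_square:
  fixes k n :: real
  assumes k: "1 \<le> k" and kn: "k + 1 \<le> n"
  shows "2 * (k * (n * n - n)) \<le> (k * (2 * n - k - 1))\<^sup>2"
proof -
  have "2 * (n - 1) \<le> k * (2 * n - k - 1)"
    using mult_nonneg_nonneg[of "k - 1" "2 * n - 2 - k"] k kn by (simp add: algebra_simps)
  then have "2 * (n - 1) * n \<le> k * (2 * n - k - 1) * (2 * n - k - 1)"
    by (rule mult_mono) (use k kn in \<open>auto intro: mult_nonneg_nonneg\<close>)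
  then have "k * (2 * (n - 1) * n) \<le> k * (k * (2 * n - k - 1) * (2 * n - k - 1))"
    by (rule mult_left_mono) (use k in simp)
  then show ?thesis
    by (simp add: power2_eq_square algebra_simps)
qed

lemma S_k_adj_mat_add_complement_le:
  assumes E: "simple_graph n E" and k: "1 \<le> k" "k \<le> n"
  shows "S_k k (adj_mat n E) + S_k k (adj_mat n (complement E)) \<le> real k * (2 * real n - real k - 1)"
proof (cases "k = n")
  case True
  then show ?thesis
    using S_k_dim_eq_trace[OF adj_mat_carrier adj_mat_symmetric[OF E]]
      S_k_dim_eq_trace[OF adj_mat_carrier adj_mat_symmetric[OF complement_simple_graph[OF E]]]
      adj_mat_trace[OF E] adj_mat_trace[OF complement_simple_graph[OF E]] k
    by simp
next
  case False
  then have kn: "real k + 1 \<le> real n"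
    using k by simp
  define s1 where "s1 = S_k k (adj_mat n E)"
  define s2 where "s2 = S_k k (adj_mat n (complement E))"
  let ?F1 = "\<Sum>a<n. \<Sum>b<n. (adj_mat n E $$ (a, b))\<^sup>2"
  let ?F2 = "\<Sum>a<n. \<Sum>b<n. (adj_mat n (complement E) $$ (a, b))\<^sup>2"
  have "s1\<^sup>2 + s2\<^sup>2 \<le> real k * ?F1 + real k * ?F2"
    unfolding s1_def s2_def
    by (intro add_mono S_k_sq_le_frobenius[OF adj_mat_carrier adj_mat_symmetric[OF E] k(2)]
        S_k_sq_le_frobenius[OF adj_mat_carrier adj_mat_symmetric[OF complement_simple_graph[OF E]] k(2)])
  also have "\<dots> = real k * (real n * real n - real n)"
    using adj_mat_add_complement_frobenius[OF E] by (metis distrib_left)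
  finally have sum_squares: "s1\<^sup>2 + s2\<^sup>2 \<le> real k * (real n * real n - real n)" .
  have "(s1 + s2)\<^sup>2 \<le> 2 * (s1\<^sup>2 + s2\<^sup>2)"
    using zero_le_power2[of "s1 - s2"] by (simp add: power2_eq_square algebra_simps)
  also have "\<dots> \<le> 2 * (real k * (real n * real n - real n))"
    using sum_squares by simp
  also have "\<dots> \<le> (real k * (2 * real n - real k - 1))\<^sup>2"
    using two_k_n_n_minus_1_le_square k kn by simp
  finally have "(s1 + s2)\<^sup>2 \<le> (real k * (2 * real n - real k - 1))\<^sup>2" .
  then have "s1 + s2 \<le> real k * (2 * real n - real k - 1)"
    by (rule power2_le_imp_le) (use kn in \<open>auto intro: mult_nonneg_nonneg\<close>)
  then show ?thesis
    by (simp add: s1_def s2_def)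
qed

lemma A_alpha_add_complement_quadratic_form:
  assumes E: "simple_graph n E" and x: "x \<in> carrier_vec n"
  shows "x \<bullet> (A_alpha \<alpha> n E *\<^sub>v x) + x \<bullet> (A_alpha \<alpha> n (complement E) *\<^sub>v x)
    = (\<alpha> * real n - 1) * (x \<bullet> x) + (1 - \<alpha>) * (\<Sum>i<n. x $ i)\<^sup>2"
proof -
  have "x \<bullet> (A_alpha \<alpha> n E *\<^sub>v x) + x \<bullet> (A_alpha \<alpha> n (complement E) *\<^sub>v x)
      = \<alpha> * (x \<bullet> (deg_mat n E *\<^sub>v x) + x \<bullet> (deg_mat n (complement E) *\<^sub>v x))
        + (1 - \<alpha>) * (x \<bullet> (adj_mat n E *\<^sub>v x) + x \<bullet> (adj_mat n (complement E) *\<^sub>v x))"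
    unfolding A_alpha_def
    by (simp add: quadratic_form_lincomb[OF deg_mat_carrier adj_mat_carrier x] algebra_simps)
  also have "\<dots> = \<alpha> * ((real n - 1) * (x \<bullet> x)) + (1 - \<alpha>) * ((\<Sum>i<n. x $ i)\<^sup>2 - x \<bullet> x)"
    unfolding deg_mat_add_complement_quadratic_form[OF E x] adj_mat_add_complement_quadratic_form[OF E x] ..
  finally show ?thesis
    by (simp add: algebra_simps)
qed

lemma S_k_A_alpha_add_complement_ge:
  assumes E: "simple_graph n E" and \<alpha>: "\<alpha> \<le> 1" and k: "1 \<le> k" "k \<le> n"
  shows "(1 - \<alpha>) * real n + (\<alpha> * real n - 1) * real k
    \<le> S_k k (A_alpha \<alpha> n E) + S_k k (A_alpha \<alpha> n (complement E))"
proof -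
  let ?M = "A_alpha \<alpha> n E" and ?N = "A_alpha \<alpha> n (complement E)"
  let ?Z = "1 \<cdot>\<^sub>m ?M + 1 \<cdot>\<^sub>m ?N"
  have M: "?M \<in> carrier_mat n n" "?M\<^sup>T = ?M" and N: "?N \<in> carrier_mat n n" "?N\<^sup>T = ?N"
    using A_alpha_symmetric E complement_simple_graph by auto
  have Z: "?Z \<in> carrier_mat n n" "?Z\<^sup>T = ?Z"
    using lincomb_symmetric[OF M N] by auto
  have qZ: "x \<bullet> (?Z *\<^sub>v x) = (\<alpha> * real n - 1) * (x \<bullet> x) + (1 - \<alpha>) * (\<Sum>i<n. x $ i)\<^sup>2"
    if "x \<in> carrier_vec n" for x
    using quadratic_form_lincomb[OF M(1) N(1) that, of 1 1]
      A_alpha_add_complement_quadratic_form[OF E that] by simp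
  define z where "z = vec n (\<lambda>_. 1 / sqrt (real n))"
  have z: "z \<in> carrier_vec n" "z \<bullet> z = 1" "(\<Sum>i<n. z $ i)\<^sup>2 = real n"
    using k by (auto simp: z_def scalar_prod_self_sum[of _ n] power_divide power2_eq_square)
  have "(1 - \<alpha>) * real n + (\<alpha> * real n - 1) * real k = z \<bullet> (?Z *\<^sub>v z) + (real k - 1) * (\<alpha> * real n - 1)"
    unfolding qZ[OF z(1)] z(2,3) by (simp add: algebra_simps)
  also have "\<dots> \<le> S_k k ?Z"
    using \<alpha> by (intro S_k_ge_of_quadratic_form_ge[OF Z k z(1,2)]) (simp add: qZ)
  also have "\<dots> \<le> S_k k ?M + S_k k ?N"
    using S_k_lincomb_le[OF M N _ _ k(2), of 1 1] by simp
  finally show ?thesis .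
qed

lemma S_k_A_alpha_add_complement_le:
  assumes E: "simple_graph n E" and \<alpha>: "0 \<le> \<alpha>" "\<alpha> \<le> 1" and k: "1 \<le> k" "k \<le> n"
  shows "S_k k (A_alpha \<alpha> n E) + S_k k (A_alpha \<alpha> n (complement E))
    \<le> real k * ((2 - \<alpha>) * real n + \<alpha> * (real (max_degree n E) - real (min_degree n E) - 1)
        - (1 - \<alpha>) * (real k + 1))"
proof -
  let ?D = "deg_mat n E" and ?Dc = "deg_mat n (complement E)"
  let ?A = "adj_mat n E" and ?Ac = "adj_mat n (complement E)"
  have Ec: "simple_graph n (complement E)"
    by (rule complement_simple_graph[OF E])
  have SM: "S_k k (A_alpha \<alpha> n E) \<le> \<alpha> * S_k k ?D + (1 - \<alpha>) * S_k k ?A"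
    unfolding A_alpha_def using \<alpha> k
    by (intro S_k_lincomb_le) (simp_all add: deg_mat_symmetric adj_mat_symmetric[OF E])
  have SN: "S_k k (A_alpha \<alpha> n (complement E)) \<le> \<alpha> * S_k k ?Dc + (1 - \<alpha>) * S_k k ?Ac"
    unfolding A_alpha_def using \<alpha> k
    by (intro S_k_lincomb_le) (simp_all add: deg_mat_symmetric adj_mat_symmetric[OF Ec])
  have SD: "S_k k ?D \<le> real k * real (max_degree n E)"
    using k unfolding max_degree_def
    by (intro S_k_le_of_quadratic_form_le deg_mat_quadratic_form_le) (auto simp: deg_mat_symmetric)
  have SDc: "S_k k ?Dc \<le> real k * (real n - 1 - real (min_degree n E))"
    using k E unfolding min_degree_def
    by (intro S_k_le_of_quadratic_form_le deg_mat_quadratic_form_le)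
      (auto simp: deg_mat_symmetric degree_complement)
  have "S_k k (A_alpha \<alpha> n E) + S_k k (A_alpha \<alpha> n (complement E))
      \<le> \<alpha> * (S_k k ?D + S_k k ?Dc) + (1 - \<alpha>) * (S_k k ?A + S_k k ?Ac)"
    using SM SN by (simp add: algebra_simps)
  also have "\<dots> \<le> \<alpha> * (real k * real (max_degree n E) + real k * (real n - 1 - real (min_degree n E)))
      + (1 - \<alpha>) * (real k * (2 * real n - real k - 1))"
    using \<alpha> by (intro add_mono mult_left_mono SD SDc S_k_adj_mat_add_complement_le[OF E k]) auto
  finally show ?thesis
    by (simp add: algebra_simps)
qed

theorem theorem6p1:
  fixes n k :: nat and E :: "nat \<Rightarrow> nat \<Rightarrow> bool" and \<alpha> :: real
  assumes "simple_graph n E"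
    and "0 \<le> \<alpha>" and "\<alpha> \<le> 1"
    and "1 \<le> k" and "k \<le> n"
  shows "(1 - \<alpha>) * real n + (\<alpha> * real n - 1) * real k
           \<le> S_k k (A_alpha \<alpha> n E) + S_k k (A_alpha \<alpha> n (complement E))
         \<and> S_k k (A_alpha \<alpha> n E) + S_k k (A_alpha \<alpha> n (complement E))
           \<le> real k * ((2 - \<alpha>) * real n
                + \<alpha> * (real (max_degree n E) - real (min_degree n E) - 1)
                - (1 - \<alpha>) * (real k + 1))"
  using S_k_A_alpha_add_complement_ge[OF assms(1,3-5)] S_k_A_alpha_add_complement_le[OF assms]
  by blast

end
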